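(* Let $\lambda$ be a nonzero real number and $n$ a positive integer. Then, as polynomials in $x$, $$F_{n+1,\lambda}(x)=(x-n\lambda)F_{n,\lambda}(x)+(x+x^{2})F_{n,\lambda}'(x),$$ where $F_{n,\lambda}'(x)=\frac{d}{dx}F_{n,\lambda}(x)$.
   Context: For real $y$ and integer $k\ge0$: $(y)_{0,\lambda}=1$, $(y)_{k,\lambda}=y(y-\lambda)\cdots(y-(k-1)\lambda)$. The degenerate exponential is $e_\lambda(t)=\sum_{k\ge0}(1)_{k,\lambda}t^k/k!=(1+\lambda t)^{1/\lambda}$. The degenerate Fubini polynomials are defined by $\frac{1}{1-x(e_\lambda(t)-1)}=\sum_{n\ge0}F_{n,\lambda}(x)\frac{t^n}{n!}$. *)

theory Defs
  imports "HOL-Analysis.Analysis" "HOL-Computational_Algebra.Formal_Power_Series"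
begin

definition gen_fall :: "real \<Rightarrow> nat \<Rightarrow> real \<Rightarrow> real" where
  "gen_fall y k lam = (\<Prod>i<k. y - of_nat i * lam)"

definition deg_exp :: "real \<Rightarrow> real fps" where
  "deg_exp lam = Abs_fps (\<lambda>k. gen_fall 1 k lam / fact k)"

definition deg_fubini :: "nat \<Rightarrow> real \<Rightarrow> real \<Rightarrow> real" where
  "deg_fubini n lam x = fact n * fps_nth (inverse (1 - fps_const x * (deg_exp lam - 1))) n"

end

theory Submission
  imports Defs
begin

text \<open>Write \<open>E = e\<^sub>\<lambda>(t) - 1\<close>. Expanding \<open>1/(1 - x E)\<close> as a geometric series shows that
  \<open>F\<^sub>n(x)\<close> is a polynomial whose \<open>k\<close>-th coefficient is \<open>n!\<close> times the \<open>n\<close>-th coefficient of \<open>E\<^sup>k\<close>.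
  The degenerate exponential satisfies \<open>(1 + \<lambda>t) e\<^sub>\<lambda>'(t) = e\<^sub>\<lambda>(t)\<close>, hence
  \<open>(1 + \<lambda>t) (E\<^sup>k)' = k E\<^sup>k + k E\<^sup>k\<^sup>-\<^sup>1\<close>; the coefficient of \<open>t\<^sup>n\<close> of this identity is the claimed
  recurrence read coefficientwise in \<open>x\<close>.\<close>

lemma gen_fall_Suc: "gen_fall y (Suc k) lam = gen_fall y k lam * (y - of_nat k * lam)"
  by (simp add: gen_fall_def)

lemma deg_exp_nth_0 [simp]: "fps_nth (deg_exp lam) 0 = 1"
  by (simp add: deg_exp_def gen_fall_def)

lemma fps_nth_one_plus_X_times_deriv:
  fixes f :: "'a::comm_ring_1 fps"
  shows "fps_nth ((1 + fps_const c * fps_X) * fps_deriv f) m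
           = of_nat (Suc m) * fps_nth f (Suc m) + c * of_nat m * fps_nth f m"
  by (cases m) (simp_all add: distrib_right mult.assoc)

lemma deg_exp_ode: "(1 + fps_const lam * fps_X) * fps_deriv (deg_exp lam) = deg_exp lam"
proof (rule fps_ext)
  fix m
  have "real (Suc m) * (gen_fall 1 m lam * (1 - real m * lam) / (real (Suc m) * fact m))
          + lam * real m * (gen_fall 1 m lam / fact m) = gen_fall 1 m lam / fact m"
    by (simp add: field_simps del: of_nat_Suc)
  then show "fps_nth ((1 + fps_const lam * fps_X) * fps_deriv (deg_exp lam)) m
               = fps_nth (deg_exp lam) m"
    by (simp add: fps_nth_one_plus_X_times_deriv deg_exp_def gen_fall_Suc del: of_nat_Suc)
qed

lemma fps_inverse_one_minus_nth:
  fixes b :: "'a::field fps"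
  assumes "fps_nth b 0 = 0"
  shows "fps_nth (inverse (1 - b)) m = (\<Sum>k\<le>m. fps_nth (b ^ k) m)"
proof -
  have "inverse (1 - b) = inverse (1 - fps_X) oo b"
    using fps_inverse_compose[OF assms, of "1 - fps_X"] assms
    by (simp add: fps_compose_sub_distrib)
  also have "\<dots> = Abs_fps (\<lambda>_. 1) oo b"
    by (simp add: fps_inverse_one_minus_fps_X)
  finally show ?thesis
    by (simp add: fps_compose_nth atLeast0AtMost)
qed

text \<open>In the paper's notation this is \<open>k! S\<^sub>2\<^sub>,\<^sub>\<lambda>(m, k) / m!\<close>, with \<open>S\<^sub>2\<^sub>,\<^sub>\<lambda>\<close> the degenerate
  Stirling numbers of the second kind.\<close>
definition deg_exp_pow_coeff :: "real \<Rightarrow> nat \<Rightarrow> nat \<Rightarrow> real" where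
  "deg_exp_pow_coeff lam k m = fps_nth ((deg_exp lam - 1) ^ k) m"

lemma deg_exp_pow_coeff_eq_0: "m < k \<Longrightarrow> deg_exp_pow_coeff lam k m = 0"
  using startsby_zero_power_prefix[of "deg_exp lam - 1" k]
  by (simp add: deg_exp_pow_coeff_def)

lemma deg_exp_pow_coeff_Suc:
  "of_nat (Suc m) * deg_exp_pow_coeff lam k (Suc m)
     = (of_nat k - of_nat m * lam) * deg_exp_pow_coeff lam k m
       + of_nat k * deg_exp_pow_coeff lam (k - 1) m"
proof -
  define E where "E = deg_exp lam - 1"
  have "(1 + fps_const lam * fps_X) * fps_deriv (E ^ k)
          = fps_const (of_nat k) * ((1 + fps_const lam * fps_X) * fps_deriv (deg_exp lam)) * E ^ (k - 1)"
    by (simp add: E_def fps_deriv_power mult_ac)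
  also have "\<dots> = fps_const (of_nat k) * (E + 1) * E ^ (k - 1)"
    by (simp add: E_def deg_exp_ode)
  also have "\<dots> = fps_const (of_nat k) * E ^ k + fps_const (of_nat k) * E ^ (k - 1)"
    by (cases k) (simp_all add: algebra_simps)
  finally have ode: "(1 + fps_const lam * fps_X) * fps_deriv (E ^ k)
      = fps_const (of_nat k) * E ^ k + fps_const (of_nat k) * E ^ (k - 1)" .
  have "of_nat (Suc m) * fps_nth (E ^ k) (Suc m) + lam * of_nat m * fps_nth (E ^ k) m
      = fps_nth ((1 + fps_const lam * fps_X) * fps_deriv (E ^ k)) m"
    by (rule fps_nth_one_plus_X_times_deriv[symmetric])
  also have "\<dots> = of_nat k * fps_nth (E ^ k) m + of_nat k * fps_nth (E ^ (k - 1)) m"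
    by (simp only: ode fps_add_nth fps_mult_left_const_nth)
  finally show ?thesis
    by (simp add: deg_exp_pow_coeff_def E_def algebra_simps del: of_nat_Suc)
qed

lemma deg_fubini_eq_sum:
  "deg_fubini m lam x = fact m * (\<Sum>k\<le>m. deg_exp_pow_coeff lam k m * x ^ k)"
  by (simp add: deg_fubini_def fps_inverse_one_minus_nth deg_exp_pow_coeff_def
                power_mult_distrib fps_const_power mult_ac)

lemma deg_fubini_has_real_derivative:
  "((\<lambda>y. deg_fubini m lam y) has_real_derivative
      fact m * (\<Sum>k\<le>m. deg_exp_pow_coeff lam k m * (of_nat k * x ^ (k - 1)))) (at x)"
  unfolding deg_fubini_eq_sum
  by (auto intro!: derivative_eq_intros sum.cong)

lemma deg_fubini_Suc_eq_sum:
  "deg_fubini (Suc n) lam x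
     = fact n * (\<Sum>k\<le>n. deg_exp_pow_coeff lam k n
                          * ((of_nat k - of_nat n * lam) * x ^ k + of_nat (Suc k) * x ^ Suc k))"
proof -
  let ?c = "deg_exp_pow_coeff lam"
  have "deg_fubini (Suc n) lam x = fact n * (\<Sum>k\<le>Suc n. of_nat (Suc n) * ?c k (Suc n) * x ^ k)"
    unfolding deg_fubini_eq_sum fact_Suc sum_distrib_left by (simp only: of_nat_mult mult_ac)
  also have "\<dots> = fact n * ((\<Sum>k\<le>Suc n. (of_nat k - of_nat n * lam) * ?c k n * x ^ k)
                            + (\<Sum>k\<le>Suc n. of_nat k * ?c (k - 1) n * x ^ k))"
    by (simp add: deg_exp_pow_coeff_Suc sum.distrib[symmetric] algebra_simps del: of_nat_Suc)
  also have "\<dots> = fact n * ((\<Sum>k\<le>n. (of_nat k - of_nat n * lam) * ?c k n * x ^ k)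
                            + (\<Sum>k\<le>n. of_nat (Suc k) * ?c k n * x ^ Suc k))"
    by (subst (2) sum.atMost_Suc_shift) (simp add: deg_exp_pow_coeff_eq_0 del: of_nat_Suc)
  finally show ?thesis
    by (simp add: sum.distrib[symmetric] algebra_simps del: of_nat_Suc)
qed

theorem theorem14:
  fixes lam :: real and n :: nat
  assumes "lam \<noteq> 0" and "n \<ge> 1"
  shows "\<forall>x::real. deg_fubini (n + 1) lam x
           = (x - of_nat n * lam) * deg_fubini n lam x
             + (x + x^2) * deriv (\<lambda>y. deg_fubini n lam y) x"
proof
  fix x :: real
  let ?c = "deg_exp_pow_coeff lam"
  have term_eq: "?c k n * ((of_nat k - of_nat n * lam) * x ^ k + of_nat (Suc k) * x ^ Suc k)
      = (x - of_nat n * lam) * (?c k n * x ^ k) + (x + x^2) * (?c k n * (of_nat k * x ^ (k - 1)))"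
    for k
    by (cases k) (simp_all add: algebra_simps power2_eq_square)
  have deriv_eq: "deriv (\<lambda>y. deg_fubini n lam y) x
      = fact n * (\<Sum>k\<le>n. ?c k n * (of_nat k * x ^ (k - 1)))"
    by (rule DERIV_imp_deriv[OF deg_fubini_has_real_derivative])
  have "deg_fubini (Suc n) lam x
      = fact n * (\<Sum>k\<le>n. (x - of_nat n * lam) * (?c k n * x ^ k)
                             + (x + x^2) * (?c k n * (of_nat k * x ^ (k - 1))))"
    by (simp only: deg_fubini_Suc_eq_sum term_eq)
  also have "\<dots> = (x - of_nat n * lam) * deg_fubini n lam x
                  + (x + x^2) * deriv (\<lambda>y. deg_fubini n lam y) x"
    unfolding deriv_eq deg_fubini_eq_sum[of n lam x]
    by (simp only: sum.distrib sum_distrib_left distrib_left mult_ac)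
  finally show "deg_fubini (n + 1) lam x
          = (x - of_nat n * lam) * deg_fubini n lam x
            + (x + x^2) * deriv (\<lambda>y. deg_fubini n lam y) x"
    by simp
qed

end
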